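(* Let $k\ge1$ be an integer and $g:\mathbb{N}\to\mathbb{R}$ be such that $F_0(g;J,L)$ is finite for all integers $J$ with $k>J$ and all $L\ge0$. Then for every $J<k$, every $L\ge0$ and every $m=1,\dots,J-1$, $F_m(g;J,L)$ is finite and $$F_m(g;J,L)=F_{m-1}(g;J,L)-F_{m-1}(g;J-1,L)-\frac1k F_{m-1}(g;J-1,L+1).$$ In addition, this recursion also holds for $m=J$ if $g(i)=1$ for all $i\in\mathbb{N}$.
   Context: $\mathbb{N}=\{0,1,2,\dots\}$. For integers $J\ge1$, $0\le m\le J$, $L\ge0$ and $g:\mathbb{N}\to\mathbb{R}$, with $\mathbf{n}=(n_1,\dots,n_J)$ and $|\mathbf{n}|=n_1+\dots+n_J$, $$F_m(g;J,L)=\sum_{\substack{n_1\ge2,\dots,n_m\ge2\\ n_{m+1}\ge0,\dots,n_J\ge0}}\frac{(L+|\mathbf{n}|)!}{n_1!\cdots n_J!}\Big(\frac1k\Big)^{|\mathbf{n}|}g(n_J).$$ *)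

theory Defs
  imports "HOL-Analysis.Analysis"
begin

text \<open>Index set of F_m(g;J,L): tuples (n_1,...,n_J) as lists of length J,
  with n_1,...,n_m >= 2 (list positions 0..m-1) and the rest >= 0.\<close>
definition Fdom :: "nat \<Rightarrow> nat \<Rightarrow> nat list set" where
  "Fdom m J = {ns. length ns = J \<and> (\<forall>i<m. 2 \<le> ns ! i)}"

definition Fterm :: "nat \<Rightarrow> (nat \<Rightarrow> real) \<Rightarrow> nat \<Rightarrow> nat list \<Rightarrow> real" where
  "Fterm k g L ns = fact (L + sum_list ns) / (\<Prod>x\<leftarrow>ns. fact x)
                     * (1 / real k) ^ sum_list ns * g (last ns)"

definition F :: "nat \<Rightarrow> (nat \<Rightarrow> real) \<Rightarrow> nat \<Rightarrow> nat \<Rightarrow> nat \<Rightarrow> real" where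
  "F k g m J L = infsum (Fterm k g L) (Fdom m J)"

text \<open>"F_m(g;J,L) is finite": the (unordered) series converges, which for real
  summands is absolute convergence.\<close>
definition F_finite :: "nat \<Rightarrow> (nat \<Rightarrow> real) \<Rightarrow> nat \<Rightarrow> nat \<Rightarrow> nat \<Rightarrow> bool" where
  "F_finite k g m J L \<longleftrightarrow> Fterm k g L summable_on Fdom m J"

end

theory Submission
  imports Defs
begin

text \<open>Split the domain of \<open>F\<^sub>p(g;J+1,L)\<close> according to the value \<open>c\<close> of the entry \<open>n\<^sub>p\<^sub>+\<^sub>1\<close>:
  \<open>c \<ge> 2\<close> gives the domain of \<open>F\<^sub>p\<^sub>+\<^sub>1(g;J+1,L)\<close>, while deleting an entry \<open>c = 0\<close> or \<open>c = 1\<close>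
  is a bijection onto the domain of \<open>F\<^sub>p(g;J,\<cdot>)\<close> that leaves the summand unchanged for \<open>c = 0\<close>
  and turns it into \<open>1/k\<close> times the summand with \<open>L+1\<close> for \<open>c = 1\<close>. Deleting an entry must not
  change \<open>n\<^sub>J\<close>, which is why the entry may be the last one only when \<open>g\<close> is constant.\<close>

definition insert_at :: "nat \<Rightarrow> 'a \<Rightarrow> 'a list \<Rightarrow> 'a list" where
  "insert_at p x xs = take p xs @ x # drop p xs"

lemma length_insert_at [simp]: "length (insert_at p x xs) = Suc (length xs)"
  by (simp add: insert_at_def)

lemma nth_insert_at_less: "i < p \<Longrightarrow> p \<le> length xs \<Longrightarrow> insert_at p x xs ! i = xs ! i"
  by (simp add: insert_at_def nth_append)

lemma nth_insert_at_self: "p \<le> length xs \<Longrightarrow> insert_at p x xs ! p = x"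
  by (simp add: insert_at_def nth_append)

lemma last_insert_at: "p < length xs \<Longrightarrow> last (insert_at p x xs) = last xs"
  by (simp add: insert_at_def)

lemma map_insert_at: "map f (insert_at p x xs) = insert_at p (f x) (map f xs)"
  by (simp add: insert_at_def take_map drop_map)

lemma sum_list_insert_at:
  fixes x :: "'a::comm_monoid_add"
  shows "sum_list (insert_at p x xs) = x + sum_list xs"
  using sum_list_append [of "take p xs" "drop p xs"] by (simp add: insert_at_def add_ac)

lemma prod_list_insert_at:
  fixes x :: "'a::comm_monoid_mult"
  shows "prod_list (insert_at p x xs) = x * prod_list xs"
  using prod_list.append [of "take p xs" "drop p xs"] by (simp add: insert_at_def mult_ac)

lemma insert_at_nth_take_drop:
  "p < length xs \<Longrightarrow> insert_at p (xs ! p) (take p xs @ drop (Suc p) xs) = xs"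
  by (simp add: insert_at_def id_take_nth_drop [symmetric])

lemma inj_on_insert_at: "inj_on (insert_at p x) {xs. p \<le> length xs}"
proof (rule inj_onI)
  fix xs ys assume "xs \<in> {xs. p \<le> length xs}" "ys \<in> {xs. p \<le> length xs}"
    and eq: "insert_at p x xs = insert_at p x ys"
  then have "take p xs = take p ys" "drop p xs = drop p ys"
    using arg_cong [OF eq, of "take p"] arg_cong [OF eq, of "drop (Suc p)"]
    by (simp_all add: insert_at_def)
  then show "xs = ys"
    by (metis append_take_drop_id)
qed

lemma Fdom_antimono: "m \<le> m' \<Longrightarrow> Fdom m' J \<subseteq> Fdom m J"
  by (auto simp: Fdom_def)

lemma Fdom_Suc: "Fdom (Suc p) J = {xs \<in> Fdom p J. 2 \<le> xs ! p}"
  by (auto simp: Fdom_def less_Suc_eq)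

lemma insert_at_image_Fdom:
  assumes "p \<le> J"
  shows "insert_at p c ` Fdom p J = {xs \<in> Fdom p (Suc J). xs ! p = c}"
proof
  show "insert_at p c ` Fdom p J \<subseteq> {xs \<in> Fdom p (Suc J). xs ! p = c}"
    using assms by (auto simp: Fdom_def nth_insert_at_less nth_insert_at_self)
next
  show "{xs \<in> Fdom p (Suc J). xs ! p = c} \<subseteq> insert_at p c ` Fdom p J"
  proof
    fix xs assume xs: "xs \<in> {xs \<in> Fdom p (Suc J). xs ! p = c}"
    then have "take p xs @ drop (Suc p) xs \<in> Fdom p J"
      using assms by (auto simp: Fdom_def nth_append)
    moreover have "xs = insert_at p c (take p xs @ drop (Suc p) xs)"
      using xs assms insert_at_nth_take_drop [of p xs] by (auto simp: Fdom_def)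
    ultimately show "xs \<in> insert_at p c ` Fdom p J"
      by blast
  qed
qed

lemma Fterm_insert_at:
  assumes "p < length ns \<or> (\<forall>i j. g i = g j)"
  shows "Fterm k g L (insert_at p c ns) = (1 / real k) ^ c / fact c * Fterm k g (L + c) ns"
proof -
  have "g (last (insert_at p c ns)) = g (last ns)"
    using assms last_insert_at by metis
  then show ?thesis
    by (simp add: Fterm_def map_insert_at sum_list_insert_at prod_list_insert_at
        power_add add.assoc)
qed

lemma infsum_Fterm_slice:
  assumes "p \<le> J" and "p < J \<or> (\<forall>i j. g i = g j)"
  shows "infsum (Fterm k g L) {xs \<in> Fdom p (Suc J). xs ! p = c}
           = (1 / real k) ^ c / fact c * F k g p J (L + c)"
proof -
  have inj: "inj_on (insert_at p c) (Fdom p J)"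
    by (rule inj_on_subset [OF inj_on_insert_at]) (use assms(1) in \<open>auto simp: Fdom_def\<close>)
  have "infsum (Fterm k g L) {xs \<in> Fdom p (Suc J). xs ! p = c}
          = infsum (\<lambda>ns. Fterm k g L (insert_at p c ns)) (Fdom p J)"
    using infsum_reindex [OF inj, of "Fterm k g L"]
    by (simp add: insert_at_image_Fdom [OF assms(1)] comp_def)
  also have "\<dots> = infsum (\<lambda>ns. (1 / real k) ^ c / fact c * Fterm k g (L + c) ns) (Fdom p J)"
    using assms by (intro infsum_cong Fterm_insert_at) (auto simp: Fdom_def)
  also have "\<dots> = (1 / real k) ^ c / fact c * F k g p J (L + c)"
    unfolding F_def by (rule infsum_cmult_right')
  finally show ?thesis .
qed

lemma F_Suc_recursion:
  assumes "p \<le> J" and "p < J \<or> (\<forall>i j. g i = g j)"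
    and summable: "Fterm k g L summable_on Fdom p (Suc J)"
  shows "F_finite k g (Suc p) (Suc J) L"
    and "F k g (Suc p) (Suc J) L
           = F k g p (Suc J) L - F k g p J L - (1 / real k) * F k g p J (L + 1)"
proof -
  define D where "D = Fdom p (Suc J)"
  define A where "A c = {xs \<in> D. xs ! p = c}" for c :: nat
  have split: "Fdom (Suc p) (Suc J) = D - (A 0 \<union> A 1)"
    by (auto simp: Fdom_Suc D_def A_def)
  have summable_A: "Fterm k g L summable_on A c" for c
    using summable by (rule summable_on_subset_banach) (auto simp: A_def D_def)
  show "F_finite k g (Suc p) (Suc J) L"
    unfolding F_finite_def split
    using summable by (rule summable_on_subset_banach) (auto simp: D_def)
  have "F k g (Suc p) (Suc J) L = infsum (Fterm k g L) D - infsum (Fterm k g L) (A 0 \<union> A 1)"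
    unfolding F_def split
    by (rule infsum_Diff)
      (use summable summable_A in \<open>auto simp: D_def A_def intro: summable_on_Un_disjoint\<close>)
  also have "\<dots> = infsum (Fterm k g L) D - infsum (Fterm k g L) (A 0) - infsum (Fterm k g L) (A 1)"
    by (subst infsum_Un_disjoint [OF summable_A summable_A]) (auto simp: A_def)
  finally show "F k g (Suc p) (Suc J) L
           = F k g p (Suc J) L - F k g p J L - (1 / real k) * F k g p J (L + 1)"
    using infsum_Fterm_slice [OF assms(1,2), of k L] by (simp add: A_def D_def F_def)
qed

theorem lemmaA1:
  fixes k :: nat and g :: "nat \<Rightarrow> real"
  assumes "1 \<le> k"
    and "\<forall>J L. 1 \<le> J \<longrightarrow> J < k \<longrightarrow> F_finite k g 0 J L"
  shows "(\<forall>J L m. J < k \<longrightarrow> 1 \<le> m \<longrightarrow> m \<le> J - 1 \<longrightarrow>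
            F_finite k g m J L \<and>
            F k g m J L = F k g (m - 1) J L - F k g (m - 1) (J - 1) L
                          - (1 / real k) * F k g (m - 1) (J - 1) (L + 1))
       \<and> ((\<forall>i. g i = 1) \<longrightarrow>
          (\<forall>J L. 1 \<le> J \<longrightarrow> J < k \<longrightarrow>
            F k g J J L = F k g (J - 1) J L - F k g (J - 1) (J - 1) L
                          - (1 / real k) * F k g (J - 1) (J - 1) (L + 1)))"
proof -
  have summable: "Fterm k g L summable_on Fdom p (Suc J)" if "Suc J < k" for p J L
    using assms(2) that unfolding F_finite_def
    by (metis Fdom_antimono le0 le_add1 plus_1_eq_Suc summable_on_subset_banach)
  have "F_finite k g m J L \<and>
          F k g m J L = F k g (m - 1) J L - F k g (m - 1) (J - 1) L
                        - (1 / real k) * F k g (m - 1) (J - 1) (L + 1)"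
    if range: "J < k" "1 \<le> m" "m \<le> J - 1" for J L m
  proof -
    obtain p J' where "m = Suc p" "J = Suc J'" "p < J'"
      using range by (cases m; cases J) auto
    then show ?thesis
      using F_Suc_recursion [of p J' g k L] summable [of J' L p] range by simp
  qed
  moreover have "F k g J J L = F k g (J - 1) J L - F k g (J - 1) (J - 1) L
                               - (1 / real k) * F k g (J - 1) (J - 1) (L + 1)"
    if g_one: "\<forall>i. g i = 1" and range: "1 \<le> J" "J < k" for J L
  proof -
    obtain J' where "J = Suc J'"
      using range by (cases J) auto
    then show ?thesis
      using F_Suc_recursion(2) [of J' J' g k L] summable [of J' L J'] g_one range by simp
  qed
  ultimately show ?thesis
    by blast
qed

end
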